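(* Let $\mathfrak F=(X,\parallel,Y,S_\vee)$ be a frame satisfying (F0)–(F4). For $B\in\mathcal G(Y)$ define $\overline\zeta_S(B)=\{x\in X:\overline\eta_S(\Gamma x)\subseteq B\}$. Then $\overline\zeta_S(B)\in\mathcal G(X)$ and $\overline\zeta_S$ is the right residual of $\overline\eta_S:\mathcal G(X)\to\mathcal G(Y)$: for all $A\in\mathcal G(X)$ and $B\in\mathcal G(Y)$, $\overline\eta_S(A)\subseteq B$ iff $A\subseteq\overline\zeta_S(B)$.
   Context: Polarity $(X,\parallel,Y)$, ${\parallel}\subseteq X\times Y$, $I$ its complement. $U'=\{y:\forall x\in U\;x\parallel y\}$ for $U\subseteq X$, $V'=\{x:\forall y\in V\;x\parallel y\}$ for $V\subseteq Y$; stable sets $A=A''\subseteq X$ form $\mathcal G(X)$, co-stable sets $B=B''\subseteq Y$ form $\mathcal G(Y)$ (joins $(\bigcup A_j)''$). $x\preceq z$ iff $\{x\}'\subseteq\{z\}'$, similarly on $Y$; separated means these are partial orders; $\Gamma u$ is the up-set of $u$; closed elements are the sets $\Gamma u$. Frame $(X,\parallel,Y,S_\vee)$, $S_\vee\subseteq Y\times X$, $S_\vee x=\{y:yS_\vee x\}$, $yS_\vee=\{x:yS_\vee x\}$, $zS'_\vee x$ iff $\forall y(yS_\vee x\Rightarrow z\parallel y)$. Axioms (F0) $\forall x\exists y\,xIy$, $\forall y\exists x\,xIy$; (F1) separated; (F2) each $S_\vee x$ a closed element of $\mathcal G(Y)$; (F3) each $yS_\vee$ a down-set; (F4) for each $x$,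 $\{z:zS'_\vee x\}\in\mathcal G(X)$, for each $z$, $\{x:zS'_\vee x\}\in\mathcal G(X)$. $\overline\eta_S(A)=(\bigcup_{x\in A}S_\vee x)''$ for $A\in\mathcal G(X)$. *)

theory Defs
  imports Main
begin

text \<open>Polarity (X, R, Y) with R the relation written as parallel; frame relation S
  (the relation S_vee) between Y and X.  All notions are relativised to the carriers X and Y.\<close>

definition lpr :: "'a set \<Rightarrow> ('a \<Rightarrow> 'b \<Rightarrow> bool) \<Rightarrow> 'b set \<Rightarrow> 'a set \<Rightarrow> 'b set" where
  "lpr X R Y U = {y \<in> Y. \<forall>x\<in>U. R x y}"

definition rpr :: "'a set \<Rightarrow> ('a \<Rightarrow> 'b \<Rightarrow> bool) \<Rightarrow> 'b set \<Rightarrow> 'b set \<Rightarrow> 'a set" where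
  "rpr X R Y V = {x \<in> X. \<forall>y\<in>V. R x y}"

definition stable :: "'a set \<Rightarrow> ('a \<Rightarrow> 'b \<Rightarrow> bool) \<Rightarrow> 'b set \<Rightarrow> 'a set \<Rightarrow> bool" where
  "stable X R Y A \<longleftrightarrow> A \<subseteq> X \<and> rpr X R Y (lpr X R Y A) = A"

definition costable :: "'a set \<Rightarrow> ('a \<Rightarrow> 'b \<Rightarrow> bool) \<Rightarrow> 'b set \<Rightarrow> 'b set \<Rightarrow> bool" where
  "costable X R Y B \<longleftrightarrow> B \<subseteq> Y \<and> lpr X R Y (rpr X R Y B) = B"

definition leX :: "'a set \<Rightarrow> ('a \<Rightarrow> 'b \<Rightarrow> bool) \<Rightarrow> 'b set \<Rightarrow> 'a \<Rightarrow> 'a \<Rightarrow> bool" where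
  "leX X R Y x z \<longleftrightarrow> lpr X R Y {x} \<subseteq> lpr X R Y {z}"

definition leY :: "'a set \<Rightarrow> ('a \<Rightarrow> 'b \<Rightarrow> bool) \<Rightarrow> 'b set \<Rightarrow> 'b \<Rightarrow> 'b \<Rightarrow> bool" where
  "leY X R Y y w \<longleftrightarrow> rpr X R Y {y} \<subseteq> rpr X R Y {w}"

definition GammaX :: "'a set \<Rightarrow> ('a \<Rightarrow> 'b \<Rightarrow> bool) \<Rightarrow> 'b set \<Rightarrow> 'a \<Rightarrow> 'a set" where
  "GammaX X R Y x = {z \<in> X. leX X R Y x z}"

definition GammaY :: "'a set \<Rightarrow> ('a \<Rightarrow> 'b \<Rightarrow> bool) \<Rightarrow> 'b set \<Rightarrow> 'b \<Rightarrow> 'b set" where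
  "GammaY X R Y y = {w \<in> Y. leY X R Y y w}"

definition separated :: "'a set \<Rightarrow> ('a \<Rightarrow> 'b \<Rightarrow> bool) \<Rightarrow> 'b set \<Rightarrow> bool" where
  "separated X R Y \<longleftrightarrow>
     (\<forall>x\<in>X. \<forall>z\<in>X. leX X R Y x z \<and> leX X R Y z x \<longrightarrow> x = z) \<and>
     (\<forall>y\<in>Y. \<forall>w\<in>Y. leY X R Y y w \<and> leY X R Y w y \<longrightarrow> y = w)"

definition Sset :: "'a set \<Rightarrow> 'b set \<Rightarrow> ('b \<Rightarrow> 'a \<Rightarrow> bool) \<Rightarrow> 'a \<Rightarrow> 'b set" where
  "Sset X Y S x = {y \<in> Y. S y x}"

definition Sinv :: "'a set \<Rightarrow> 'b set \<Rightarrow> ('b \<Rightarrow> 'a \<Rightarrow> bool) \<Rightarrow> 'b \<Rightarrow> 'a set" where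
  "Sinv X Y S y = {x \<in> X. S y x}"

definition Sprime :: "'a set \<Rightarrow> ('a \<Rightarrow> 'b \<Rightarrow> bool) \<Rightarrow> 'b set \<Rightarrow> ('b \<Rightarrow> 'a \<Rightarrow> bool) \<Rightarrow> 'a \<Rightarrow> 'a \<Rightarrow> bool" where
  "Sprime X R Y S z x \<longleftrightarrow> (\<forall>y\<in>Y. S y x \<longrightarrow> R z y)"

definition frame :: "'a set \<Rightarrow> ('a \<Rightarrow> 'b \<Rightarrow> bool) \<Rightarrow> 'b set \<Rightarrow> ('b \<Rightarrow> 'a \<Rightarrow> bool) \<Rightarrow> bool" where
  "frame X R Y S \<longleftrightarrow>
     \<comment> \<open>(F0)\<close>
     (\<forall>x\<in>X. \<exists>y\<in>Y. \<not> R x y) \<and> (\<forall>y\<in>Y. \<exists>x\<in>X. \<not> R x y) \<and>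
     \<comment> \<open>(F1)\<close>
     separated X R Y \<and>
     \<comment> \<open>(F2)\<close>
     (\<forall>x\<in>X. \<exists>y\<in>Y. Sset X Y S x = GammaY X R Y y) \<and>
     \<comment> \<open>(F3): each y S is a down-set of X\<close>
     (\<forall>y\<in>Y. \<forall>x\<in>Sinv X Y S y. \<forall>z\<in>X. leX X R Y z x \<longrightarrow> z \<in> Sinv X Y S y) \<and>
     \<comment> \<open>(F4)\<close>
     (\<forall>x\<in>X. stable X R Y {z \<in> X. Sprime X R Y S z x}) \<and>
     (\<forall>z\<in>X. stable X R Y {x \<in> X. Sprime X R Y S z x})"

definition eta :: "'a set \<Rightarrow> ('a \<Rightarrow> 'b \<Rightarrow> bool) \<Rightarrow> 'b set \<Rightarrow> ('b \<Rightarrow> 'a \<Rightarrow> bool) \<Rightarrow> 'a set \<Rightarrow> 'b set" where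
  "eta X R Y S A = lpr X R Y (rpr X R Y (\<Union>x\<in>A. Sset X Y S x))"

definition zeta :: "'a set \<Rightarrow> ('a \<Rightarrow> 'b \<Rightarrow> bool) \<Rightarrow> 'b set \<Rightarrow> ('b \<Rightarrow> 'a \<Rightarrow> bool) \<Rightarrow> 'b set \<Rightarrow> 'a set" where
  "zeta X R Y S B = {x \<in> X. eta X R Y S (GammaX X R Y x) \<subseteq> B}"

end

theory Submission
  imports Defs
begin

text \<open>Both sides of the residuation reduce to pointwise conditions \<open>S x \<subseteq> B\<close> for \<open>x \<in> A\<close>:
  \<open>\<overline>\<eta>(A) \<subseteq> B\<close> because \<open>B\<close> is co-stable, and \<open>x \<in> \<overline>\<zeta>(B)\<close> because by (F3) the sets \<open>S z\<close>,
  \<open>z \<in> \<Gamma>x\<close>, are all contained in \<open>S x\<close>. Writing \<open>B = (B')'\<close>, the condition \<open>S x \<subseteq> B\<close> says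
  \<open>u S' x\<close> for every \<open>u \<in> B'\<close>, so \<open>\<overline>\<zeta>(B)\<close> is an intersection of the sets \<open>{x. u S' x}\<close>, which
  are stable by (F4); stable sets are closed under intersections.\<close>

lemma lpr_antimono: "U \<subseteq> V \<Longrightarrow> lpr X R Y V \<subseteq> lpr X R Y U"
  unfolding lpr_def by auto

lemma rpr_antimono: "U \<subseteq> V \<Longrightarrow> rpr X R Y V \<subseteq> rpr X R Y U"
  unfolding rpr_def by auto

lemma subset_lpr_rpr: "U \<subseteq> Y \<Longrightarrow> U \<subseteq> lpr X R Y (rpr X R Y U)"
  unfolding lpr_def rpr_def by auto

lemma subset_rpr_lpr: "U \<subseteq> X \<Longrightarrow> U \<subseteq> rpr X R Y (lpr X R Y U)"
  unfolding lpr_def rpr_def by auto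

lemma stable_Inter:
  assumes "\<And>u. u \<in> I \<Longrightarrow> stable X R Y (T u)"
  shows "stable X R Y {x \<in> X. \<forall>u\<in>I. x \<in> T u}"
proof -
  let ?Z = "{x \<in> X. \<forall>u\<in>I. x \<in> T u}"
  have "rpr X R Y (lpr X R Y ?Z) \<subseteq> T u" if "u \<in> I" for u
  proof -
    have "rpr X R Y (lpr X R Y ?Z) \<subseteq> rpr X R Y (lpr X R Y (T u))"
      using that by (intro rpr_antimono lpr_antimono) blast
    also have "\<dots> = T u"
      using assms[OF that] unfolding stable_def by simp
    finally show ?thesis .
  qed
  moreover have "rpr X R Y (lpr X R Y ?Z) \<subseteq> X"
    unfolding rpr_def by auto
  moreover have "?Z \<subseteq> rpr X R Y (lpr X R Y ?Z)"
    by (rule subset_rpr_lpr) auto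
  ultimately show ?thesis
    unfolding stable_def by blast
qed

lemma eta_subset_iff:
  assumes "costable X R Y B"
  shows "eta X R Y S A \<subseteq> B \<longleftrightarrow> (\<forall>x\<in>A. Sset X Y S x \<subseteq> B)"
proof
  assume "eta X R Y S A \<subseteq> B"
  moreover have "(\<Union>x\<in>A. Sset X Y S x) \<subseteq> eta X R Y S A"
    unfolding eta_def by (rule subset_lpr_rpr) (auto simp: Sset_def)
  ultimately show "\<forall>x\<in>A. Sset X Y S x \<subseteq> B"
    by blast
next
  assume "\<forall>x\<in>A. Sset X Y S x \<subseteq> B"
  then have "eta X R Y S A \<subseteq> lpr X R Y (rpr X R Y B)"
    unfolding eta_def by (intro lpr_antimono rpr_antimono) blast
  then show "eta X R Y S A \<subseteq> B"
    using assms unfolding costable_def by simp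
qed

lemma frame_Sset_antimono:
  assumes "frame X R Y S" and "x \<in> X" and "z \<in> X" and "leX X R Y x z"
  shows "Sset X Y S z \<subseteq> Sset X Y S x"
  using assms unfolding frame_def Sset_def Sinv_def by blast

lemma frame_stable_Sprime:
  assumes "frame X R Y S" and "u \<in> X"
  shows "stable X R Y {x \<in> X. Sprime X R Y S u x}"
  using assms unfolding frame_def by blast

lemma zeta_eq_Sset:
  assumes F: "frame X R Y S" and B: "costable X R Y B"
  shows "zeta X R Y S B = {x \<in> X. Sset X Y S x \<subseteq> B}"
proof -
  have "eta X R Y S (GammaX X R Y x) \<subseteq> B \<longleftrightarrow> Sset X Y S x \<subseteq> B" if "x \<in> X" for x
  proof -
    have "x \<in> GammaX X R Y x"
      using that unfolding GammaX_def leX_def by simp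
    moreover have "\<forall>z\<in>GammaX X R Y x. Sset X Y S z \<subseteq> Sset X Y S x"
      using frame_Sset_antimono[OF F that] unfolding GammaX_def by blast
    ultimately show ?thesis
      unfolding eta_subset_iff[OF B] by blast
  qed
  then show ?thesis
    unfolding zeta_def by blast
qed

lemma zeta_eq_Sprime:
  assumes F: "frame X R Y S" and B: "costable X R Y B"
  shows "zeta X R Y S B = {x \<in> X. \<forall>u\<in>rpr X R Y B. Sprime X R Y S u x}"
proof -
  have "Sset X Y S x \<subseteq> lpr X R Y (rpr X R Y B) \<longleftrightarrow> (\<forall>u\<in>rpr X R Y B. Sprime X R Y S u x)"
    if "x \<in> X" for x
    unfolding Sset_def lpr_def Sprime_def by blast
  then show ?thesis
    using B unfolding zeta_eq_Sset[OF F B] costable_def by auto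
qed

lemma stable_zeta:
  assumes "frame X R Y S" and "costable X R Y B"
  shows "stable X R Y (zeta X R Y S B)"
proof -
  have "stable X R Y {x \<in> X. \<forall>u\<in>rpr X R Y B. x \<in> {x \<in> X. Sprime X R Y S u x}}"
    by (rule stable_Inter, rule frame_stable_Sprime[OF assms(1)]) (auto simp: rpr_def)
  then show ?thesis
    unfolding zeta_eq_Sprime[OF assms] by (simp cong: conj_cong)
qed

lemma eta_subset_iff_subset_zeta:
  assumes "frame X R Y S" and "stable X R Y A" and "costable X R Y B"
  shows "eta X R Y S A \<subseteq> B \<longleftrightarrow> A \<subseteq> zeta X R Y S B"
  using assms(2) unfolding eta_subset_iff[OF assms(3)] zeta_eq_Sset[OF assms(1,3)] stable_def
  by blast

theorem proposition3p15:
  fixes X :: "'a set" and Y :: "'b set" and R :: "'a \<Rightarrow> 'b \<Rightarrow> bool" and S :: "'b \<Rightarrow> 'a \<Rightarrow> bool"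
  assumes "frame X R Y S"
  shows "(\<forall>B. costable X R Y B \<longrightarrow> stable X R Y (zeta X R Y S B)) \<and>
         (\<forall>A B. stable X R Y A \<longrightarrow> costable X R Y B \<longrightarrow>
            (eta X R Y S A \<subseteq> B \<longleftrightarrow> A \<subseteq> zeta X R Y S B))"
  using stable_zeta[OF assms] eta_subset_iff_subset_zeta[OF assms] by blast

end
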